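(* Let $\lambda\in\mathbb R$ (including $\lambda=0$) and $\alpha,\beta\in\mathbb R$ with $\tau\bar\tau=\alpha^2-\lambda\beta^2\neq0$. Let $\mathbf p=(p^0,p^1,p^2),\mathbf q=(q^0,q^1,q^2)\in\mathbb R^3$ with $p_a=\eta_{ab}p^b$, $q_a=\eta_{ab}q^b$, $\mathbf p^2=\eta_{ab}p^ap^b$, $\mathbf q^2=\eta_{ab}q^aq^b$, $\mathbf p\cdot\mathbf q=\eta_{ab}p^aq^b$. If $$\mathbf p^2+\lambda\,\mathbf q^2=-\mu,\qquad 2\,\mathbf p\cdot\mathbf q=-\nu,$$ then $$r=K_\tau+\epsilon^{abc}\Big(p_a\,(P_b\otimes J_c+J_b\otimes P_c)+q_a\,(P_b\otimes P_c+\lambda\,J_b\otimes J_c)\Big)$$ satisfies the classical Yang–Baxter equation $[[r,r]]=0$ in $\mathfrak g_\lambda$, i.e. it is a compatible $r$-matrix.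
   Context: Let $\mathfrak g$ denote either $so(3)$ or $so(2,1)$, with basis $J_0,J_1,J_2$ and metric $\eta=\mathrm{diag}(1,1,1)$ (for $so(3)$) or $\eta=\mathrm{diag}(1,-1,-1)$ (for $so(2,1)$); indices are raised and lowered with $\eta$, summation over repeated indices is implied, $\epsilon_{abc}$ is totally antisymmetric with $\epsilon_{012}=\epsilon^{012}=1$. For $\lambda\in\mathbb R$, $\mathfrak g_\lambda$ is the real six-dimensional Lie algebra with basis $J_a,P_a$ ($a=0,1,2$) and brackets $[J_a,J_b]=\epsilon_{abc}J^c$, $[J_a,P_b]=\epsilon_{abc}P^c$, $[P_a,P_b]=\lambda\epsilon_{abc}J^c$. For real $\alpha,\beta$ with $\tau\bar\tau:=\alpha^2-\lambda\beta^2\neq0$ set $K_\tau=\frac{\alpha}{\tau\bar\tau}(J_a\otimes P^a+P_a\otimes J^a)-\frac{\beta}{\tau\bar\tau}(\lambda J_a\otimes J^a+P_a\otimes P^a)$, $\mu=\frac{\alpha^2+\lambda\beta^2}{(\tau\bar\tau)^2}$, $\nu=-\frac{2\alpha\beta}{(\tau\bar\tau)^2}$. For $r=\sum_i x_i\otimes y_i\in\mathfrak g_\lambda\otimes\mathfrak g_\lambda$ put $r_{12}=\sum_i x_i\otimes y_i\otimes1$, $r_{13}=\sum_i x_i\otimes1\otimes y_i$, $r_{23}=\sum_i1\otimes x_i\otimes y_i$ and $[[r,r]]=[r_{12},r_{13}]+[r_{12},r_{23}]+[r_{13},r_{23}]$. A compatible $r$-matrix is an $r=r'+K_\tau$ with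 $r'$ antisymmetric and $[[r,r]]=0$. *)

theory Defs
  imports Complex_Main "HOL-Library.Function_Algebras"
begin

text \<open>
Basis indices: 0,1,2 stand for J_0,J_1,J_2 and 3,4,5 for P_0,P_1,P_2.
An element of g_lambda is a coefficient function nat => real (support in 0..5),
an element of g_lambda (x) g_lambda is a coefficient function nat => nat => real
(r i j = coefficient of e_i (x) e_j), a triple tensor is nat => nat => nat => real.
The metric is eta = diag(1,s,s) with s = 1 (so(3)) or s = -1 (so(2,1)).
Since eta is diagonal with entries +-1, the inverse metric eta^{ab} equals eta_{ab}.
\<close>

definition eta :: "real \<Rightarrow> nat \<Rightarrow> real" where
  "eta s a = (if a = 0 then 1 else s)"

text \<open>Levi-Civita symbol, epsilon_012 = epsilon^012 = 1 (same numerical values up/down).\<close>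
definition eps :: "nat \<Rightarrow> nat \<Rightarrow> nat \<Rightarrow> real" where
  "eps a b c =
    (if (a,b,c) \<in> {(0,1,2),(1,2,0),(2,0,1)} then 1
     else if (a,b,c) \<in> {(0,2,1),(2,1,0),(1,0,2)} then -1 else 0)"

definition Jv :: "nat \<Rightarrow> nat \<Rightarrow> real" where "Jv a = (\<lambda>m. if m = a then 1 else 0)"
definition Pv :: "nat \<Rightarrow> nat \<Rightarrow> real" where "Pv a = (\<lambda>m. if m = a + 3 then 1 else 0)"
definition Jup :: "real \<Rightarrow> nat \<Rightarrow> nat \<Rightarrow> real" where "Jup s a = (\<lambda>m. eta s a * Jv a m)"
definition Pup :: "real \<Rightarrow> nat \<Rightarrow> nat \<Rightarrow> real" where "Pup s a = (\<lambda>m. eta s a * Pv a m)"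

text \<open>Lie bracket of basis elements e_i, e_k of g_lambda (i,k < 6), as a coefficient vector:
  [J_a,J_b] = eps_abc J^c, [J_a,P_b] = eps_abc P^c, [P_a,J_b] = -[J_b,P_a] = eps_abc P^c,
  [P_a,P_b] = lambda eps_abc J^c.\<close>
definition br :: "real \<Rightarrow> real \<Rightarrow> nat \<Rightarrow> nat \<Rightarrow> nat \<Rightarrow> real" where
  "br s lam i k =
    (if i < 3 \<and> k < 3 then (\<Sum>c<3. (\<lambda>m. eps i k c * Jup s c m))
     else if i < 3 \<and> 3 \<le> k \<and> k < 6 then (\<Sum>c<3. (\<lambda>m. eps i (k-3) c * Pup s c m))
     else if 3 \<le> i \<and> i < 6 \<and> k < 3 then (\<Sum>c<3. (\<lambda>m. eps (i-3) k c * Pup s c m))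
     else if 3 \<le> i \<and> i < 6 \<and> 3 \<le> k \<and> k < 6
       then (\<Sum>c<3. (\<lambda>m. lam * eps (i-3) (k-3) c * Jup s c m))
     else (\<lambda>m. 0))"

definition tens :: "(nat \<Rightarrow> real) \<Rightarrow> (nat \<Rightarrow> real) \<Rightarrow> nat \<Rightarrow> nat \<Rightarrow> real" where
  "tens x y = (\<lambda>i j. x i * y j)"

text \<open>Classical Yang-Baxter bracket [[r,r]] = [r12,r13] + [r12,r23] + [r13,r23], for
  r = sum_{i,j} r_ij e_i (x) e_j.  Componentwise:
  [r12,r13] = sum r_ij r_kl [e_i,e_k] (x) e_j (x) e_l,
  [r12,r23] = sum r_ij r_kl e_i (x) [e_j,e_k] (x) e_l,
  [r13,r23] = sum r_ij r_kl e_i (x) e_k (x) [e_j,e_l].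
  cybe s lam r a b c is the coefficient of e_a (x) e_b (x) e_c.\<close>
definition cybe :: "real \<Rightarrow> real \<Rightarrow> (nat \<Rightarrow> nat \<Rightarrow> real) \<Rightarrow> nat \<Rightarrow> nat \<Rightarrow> nat \<Rightarrow> real" where
  "cybe s lam r a b c =
     (\<Sum>i<6. \<Sum>k<6. r i b * r k c * br s lam i k a)
   + (\<Sum>j<6. \<Sum>k<6. r a j * r k c * br s lam j k b)
   + (\<Sum>j<6. \<Sum>l<6. r a j * r b l * br s lam j l c)"

definition satisfies_CYBE :: "real \<Rightarrow> real \<Rightarrow> (nat \<Rightarrow> nat \<Rightarrow> real) \<Rightarrow> bool" where
  "satisfies_CYBE s lam r \<longleftrightarrow> (\<forall>a<6. \<forall>b<6. \<forall>c<6. cybe s lam r a b c = 0)"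

definition ttb :: "real \<Rightarrow> real \<Rightarrow> real \<Rightarrow> real" where
  "ttb lam \<alpha> \<beta> = \<alpha>\<^sup>2 - lam * \<beta>\<^sup>2"

definition Ktau :: "real \<Rightarrow> real \<Rightarrow> real \<Rightarrow> real \<Rightarrow> nat \<Rightarrow> nat \<Rightarrow> real" where
  "Ktau s lam \<alpha> \<beta> =
     (\<Sum>a<3. (\<lambda>i j. (\<alpha> / ttb lam \<alpha> \<beta>) * (tens (Jv a) (Pup s a) i j + tens (Pv a) (Jup s a) i j)
                 - (\<beta> / ttb lam \<alpha> \<beta>) * (lam * tens (Jv a) (Jup s a) i j + tens (Pv a) (Pup s a) i j)))"

definition mu :: "real \<Rightarrow> real \<Rightarrow> real \<Rightarrow> real" where
  "mu lam \<alpha> \<beta> = (\<alpha>\<^sup>2 + lam * \<beta>\<^sup>2) / (ttb lam \<alpha> \<beta>)\<^sup>2"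

definition nu :: "real \<Rightarrow> real \<Rightarrow> real \<Rightarrow> real" where
  "nu lam \<alpha> \<beta> = - (2 * \<alpha> * \<beta>) / (ttb lam \<alpha> \<beta>)\<^sup>2"

definition compatible_r_matrix :: "real \<Rightarrow> real \<Rightarrow> real \<Rightarrow> real \<Rightarrow> (nat \<Rightarrow> nat \<Rightarrow> real) \<Rightarrow> bool" where
  "compatible_r_matrix s lam \<alpha> \<beta> r \<longleftrightarrow>
     (\<exists>r'. (\<forall>i j. r' i j = - r' j i) \<and> r = r' + Ktau s lam \<alpha> \<beta>) \<and> satisfies_CYBE s lam r"

definition etadot :: "real \<Rightarrow> (nat \<Rightarrow> real) \<Rightarrow> (nat \<Rightarrow> real) \<Rightarrow> real" where
  "etadot s x y = (\<Sum>a<3. eta s a * x a * y a)"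

definition low :: "real \<Rightarrow> (nat \<Rightarrow> real) \<Rightarrow> nat \<Rightarrow> real" where
  "low s x a = eta s a * x a"

definition r_pq :: "real \<Rightarrow> real \<Rightarrow> real \<Rightarrow> real \<Rightarrow> (nat \<Rightarrow> real) \<Rightarrow> (nat \<Rightarrow> real) \<Rightarrow> nat \<Rightarrow> nat \<Rightarrow> real" where
  "r_pq s lam \<alpha> \<beta> p q = Ktau s lam \<alpha> \<beta> +
     (\<Sum>a<3. \<Sum>b<3. \<Sum>c<3. (\<lambda>i j. eps a b c *
        (low s p a * (tens (Pv b) (Jv c) i j + tens (Jv b) (Pv c) i j)
       + low s q a * (tens (Pv b) (Pv c) i j + lam * tens (Jv b) (Jv c) i j))))"

end

theory Submission
  imports Defs
begin

text \<open>
In coordinates, with \<open>x = \<alpha> / ttb lam \<alpha> \<beta>\<close> and \<open>y = \<beta> / ttb lam \<alpha> \<beta>\<close>, every component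
of \<open>[[r,r]]\<close> is a cubic polynomial in \<open>p\<close>, \<open>q\<close>, \<open>x\<close>, \<open>y\<close>. Contracting the structure
constants with \<open>eps\<close> shows that \<open>[[r,r]] = (p.p + lam q.q + x^2 + lam y^2) omega1 + 2 (p.q - x y) omega2\<close>,
where \<open>omega1 = eps^abc (lam J_a J_b J_c + J_a P_b P_c + P_a J_b P_c + P_a P_b J_c)\<close> and
\<open>omega2 = eps^abc (lam (J_a J_b P_c + J_a P_b J_c + P_a J_b J_c) + P_a P_b P_c)\<close> are invariant
elements of the triple tensor power of \<open>g_lam\<close>. Since \<open>mu = x^2 + lam y^2\<close> and \<open>nu = -2 x y\<close>,
the hypotheses say precisely that both coefficients vanish; the antisymmetric part of \<open>r\<close> is
\<open>r - K_tau\<close>.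
\<close>

lemma sum_apply: "(\<Sum>x\<in>A. f x) i = (\<Sum>x\<in>A. f x i)"
  by (induction A rule: infinite_finite_induct) auto

lemma sum_lessThan_3: "(\<Sum>i<3. f i) = f 0 + f 1 + f 2"
  for f :: "nat \<Rightarrow> 'a::comm_monoid_add"
  by (simp add: lessThan_nat_numeral add.commute add.left_commute)

lemma sum_lessThan_6: "(\<Sum>i<6. f i) = f 0 + f 1 + f 2 + f 3 + f 4 + f 5"
  for f :: "nat \<Rightarrow> 'a::comm_monoid_add"
  by (simp add: lessThan_nat_numeral add.commute add.left_commute)

lemma less_6_iff: "(i::nat) < 6 \<longleftrightarrow> i = 0 \<or> i = 1 \<or> i = 2 \<or> i = 3 \<or> i = 4 \<or> i = 5"
  by auto

lemma sum_eps_cyclic: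
  assumes "m < 3"
  shows "(\<Sum>i<3. \<Sum>k<3. eps i k m * h i k)
    = h ((m + 1) mod 3) ((m + 2) mod 3) - h ((m + 2) mod 3) ((m + 1) mod 3)"
proof -
  from assms consider "m = 0" | "m = 1" | "m = 2" by linarith
  then show ?thesis by cases (simp_all add: sum_lessThan_3 eps_def numeral_2_eq_2)
qed

lemma br_JJ: "i < 3 \<Longrightarrow> k < 3 \<Longrightarrow> br s lam i k m = (if m < 3 then eps i k m * eta s m else 0)"
  by (auto simp: br_def sum_apply sum_lessThan_3 Jup_def Jv_def less_Suc_eq numeral_eq_Suc)

lemma br_JP: "i < 3 \<Longrightarrow> 3 \<le> k \<Longrightarrow> k < 6 \<Longrightarrow>
    br s lam i k m = (if 3 \<le> m \<and> m < 6 then eps i (k - 3) (m - 3) * eta s (m - 3) else 0)"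
  by (auto simp: br_def sum_apply sum_lessThan_3 Pup_def Pv_def)

lemma br_PJ: "3 \<le> i \<Longrightarrow> i < 6 \<Longrightarrow> k < 3 \<Longrightarrow>
    br s lam i k m = (if 3 \<le> m \<and> m < 6 then eps (i - 3) k (m - 3) * eta s (m - 3) else 0)"
  by (auto simp: br_def sum_apply sum_lessThan_3 Pup_def Pv_def)

lemma br_PP: "3 \<le> i \<Longrightarrow> i < 6 \<Longrightarrow> 3 \<le> k \<Longrightarrow> k < 6 \<Longrightarrow>
    br s lam i k m = (if m < 3 then lam * eps (i - 3) (k - 3) m * eta s m else 0)"
  by (auto simp: br_def sum_apply sum_lessThan_3 Jup_def Jv_def less_Suc_eq numeral_eq_Suc)

lemma bracket_sum_J:
  "m < 3 \<Longrightarrow> (\<Sum>i<6. \<Sum>k<6. g i k * br s lam i k m)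
     = eta s m * (\<Sum>i<3. \<Sum>k<3. eps i k m * (g i k + lam * g (i + 3) (k + 3)))"
  by (simp add: sum_lessThan_6 sum_lessThan_3 br_JJ br_JP br_PJ br_PP algebra_simps)

lemma bracket_sum_P:
  "3 \<le> m \<Longrightarrow> m < 6 \<Longrightarrow> (\<Sum>i<6. \<Sum>k<6. g i k * br s lam i k m)
     = eta s (m - 3) * (\<Sum>i<3. \<Sum>k<3. eps i k (m - 3) * (g i (k + 3) + g (i + 3) k))"
  by (simp add: sum_lessThan_6 sum_lessThan_3 br_JJ br_JP br_PJ br_PP algebra_simps)

definition r_coord :: "real \<Rightarrow> real \<Rightarrow> real \<Rightarrow> real \<Rightarrow> (nat \<Rightarrow> real) \<Rightarrow> (nat \<Rightarrow> real) \<Rightarrow> nat \<Rightarrow> nat \<Rightarrow> real"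
  where "r_coord s lam x y p q i j =
    [[- y * lam,       q 2 * lam * s,   - q 1 * lam * s, x,          p 2 * s,   - p 1 * s],
     [- q 2 * lam * s, - y * lam * s,   q 0 * lam,       - p 2 * s,  x * s,     p 0],
     [q 1 * lam * s,   - q 0 * lam,     - y * lam * s,   p 1 * s,    - p 0,     x * s],
     [x,               p 2 * s,         - p 1 * s,       - y,        q 2 * s,   - q 1 * s],
     [- p 2 * s,       x * s,           p 0,             - q 2 * s,  - y * s,   q 0],
     [p 1 * s,         - p 0,           x * s,           q 1 * s,    - q 0,     - y * s]] ! i ! j"

lemma r_pq_eq_r_coord:
  "i < 6 \<Longrightarrow> j < 6 \<Longrightarrow>
    r_pq s lam \<alpha> \<beta> p q i j = r_coord s lam (\<alpha> / ttb lam \<alpha> \<beta>) (\<beta> / ttb lam \<alpha> \<beta>) p q i j"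
  unfolding less_6_iff
  by (elim disjE; simp add: r_coord_def r_pq_def Ktau_def sum_apply sum_lessThan_3 tens_def
      Jv_def Pv_def Jup_def Pup_def eta_def low_def eps_def algebra_simps)

lemma r_pq_minus_Ktau_antisym:
  "(r_pq s lam \<alpha> \<beta> p q - Ktau s lam \<alpha> \<beta>) i j = - (r_pq s lam \<alpha> \<beta> p q - Ktau s lam \<alpha> \<beta>) j i"
  unfolding r_pq_def add_diff_cancel_left'
  by (simp add: sum_apply sum_lessThan_3 tens_def Jv_def Pv_def eps_def low_def eta_def)

definition tens3 :: "(nat \<Rightarrow> real) \<Rightarrow> (nat \<Rightarrow> real) \<Rightarrow> (nat \<Rightarrow> real) \<Rightarrow> nat \<Rightarrow> nat \<Rightarrow> nat \<Rightarrow> real"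
  where "tens3 u v w = (\<lambda>i j k. u i * v j * w k)"

definition eps_tens :: "(nat \<Rightarrow> nat \<Rightarrow> real) \<Rightarrow> (nat \<Rightarrow> nat \<Rightarrow> real) \<Rightarrow> (nat \<Rightarrow> nat \<Rightarrow> real)
    \<Rightarrow> nat \<Rightarrow> nat \<Rightarrow> nat \<Rightarrow> real"
  where "eps_tens X Y Z = (\<Sum>a<3. \<Sum>b<3. \<Sum>c<3. (\<lambda>i j k. eps a b c * tens3 (X a) (Y b) (Z c) i j k))"

definition omega1 :: "real \<Rightarrow> nat \<Rightarrow> nat \<Rightarrow> nat \<Rightarrow> real"
  where "omega1 lam i j k = lam * eps_tens Jv Jv Jv i j k
     + eps_tens Jv Pv Pv i j k + eps_tens Pv Jv Pv i j k + eps_tens Pv Pv Jv i j k"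

definition omega2 :: "real \<Rightarrow> nat \<Rightarrow> nat \<Rightarrow> nat \<Rightarrow> real"
  where "omega2 lam i j k = lam * (eps_tens Jv Jv Pv i j k + eps_tens Jv Pv Jv i j k + eps_tens Pv Jv Jv i j k)
     + eps_tens Pv Pv Pv i j k"

lemma eps_tens_apply:
  "eps_tens X Y Z i j k = (\<Sum>a<3. X a i * (\<Sum>b<3. Y b j * (\<Sum>c<3. Z c k * eps a b c)))"
  by (simp add: eps_tens_def tens3_def sum_apply sum_distrib_left mult_ac)

lemma sum_Jv_mult: "(\<Sum>a<3. Jv a i * f a) = (if i < 3 then f i else 0)"
  by (auto simp: Jv_def sum_lessThan_3 less_Suc_eq numeral_eq_Suc)

lemma sum_Pv_mult: "(\<Sum>a<3. Pv a i * f a) = (if 3 \<le> i \<and> i < 6 then f (i - 3) else 0)"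
  by (auto simp: Pv_def sum_lessThan_3 less_Suc_eq numeral_eq_Suc)

text \<open>In the AC-normal form produced by \<open>algebra_simps\<close> equal factors are adjacent, so together
  with \<open>s * s = 1\<close> this rule removes all even powers of \<open>s\<close>.\<close>

lemma square_eq_1_cancel: "s * s = 1 \<Longrightarrow> s * (s * z) = z" for s z :: real
  by (simp add: mult.assoc[symmetric])

lemma cybe_r_coord:
  assumes "s * s = 1" and "a < 6" "b < 6" "c < 6"
  shows "cybe s lam (r_coord s lam x y p q) a b c =
    (etadot s p p + lam * etadot s q q + x\<^sup>2 + lam * y\<^sup>2) * omega1 lam a b c
    + 2 * (etadot s p q - x * y) * omega2 lam a b c"
  using assms(2-4) unfolding less_6_iff
  by (elim disjE; simp add: cybe_def bracket_sum_J bracket_sum_P sum_eps_cyclic;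
      simp add: r_coord_def eta_def omega1_def omega2_def eps_tens_apply sum_Jv_mult sum_Pv_mult
        eps_def etadot_def sum_lessThan_3 algebra_simps power2_eq_square assms(1)
        square_eq_1_cancel[OF assms(1)])

lemma cybe_cong:
  assumes "\<And>i j. i < 6 \<Longrightarrow> j < 6 \<Longrightarrow> r i j = r' i j" "a < 6" "b < 6" "c < 6"
  shows "cybe s lam r a b c = cybe s lam r' a b c"
  unfolding cybe_def using assms by (intro arg_cong2[where f = "(+)"] sum.cong refl) auto

text \<open>Both identities hold even for \<open>ttb lam \<alpha> \<beta> = 0\<close>, where division by zero gives \<open>0\<close> on
  both sides.\<close>

lemma mu_eq: "mu lam \<alpha> \<beta> = (\<alpha> / ttb lam \<alpha> \<beta>)\<^sup>2 + lam * (\<beta> / ttb lam \<alpha> \<beta>)\<^sup>2"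
  by (simp add: mu_def power_divide add_divide_distrib)

lemma nu_eq: "nu lam \<alpha> \<beta> = - 2 * (\<alpha> / ttb lam \<alpha> \<beta>) * (\<beta> / ttb lam \<alpha> \<beta>)"
  by (simp add: nu_def power2_eq_square)

lemma cybe_r_pq:
  assumes "s = 1 \<or> s = -1" "a < 6" "b < 6" "c < 6"
  shows "cybe s lam (r_pq s lam \<alpha> \<beta> p q) a b c =
    (etadot s p p + lam * etadot s q q + mu lam \<alpha> \<beta>) * omega1 lam a b c
    + (2 * etadot s p q + nu lam \<alpha> \<beta>) * omega2 lam a b c"
proof -
  define x y where "x = \<alpha> / ttb lam \<alpha> \<beta>" and "y = \<beta> / ttb lam \<alpha> \<beta>"
  have "cybe s lam (r_pq s lam \<alpha> \<beta> p q) a b c = cybe s lam (r_coord s lam x y p q) a b c"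
    using assms(2-4) by (intro cybe_cong) (simp_all add: r_pq_eq_r_coord x_def y_def)
  also have "\<dots> = (etadot s p p + lam * etadot s q q + x\<^sup>2 + lam * y\<^sup>2) * omega1 lam a b c
      + 2 * (etadot s p q - x * y) * omega2 lam a b c"
    using assms by (intro cybe_r_coord) auto
  finally show ?thesis
    by (simp add: mu_eq nu_eq x_def y_def algebra_simps)
qed

theorem mainTheorem3:
  fixes s lam \<alpha> \<beta> :: real and p q :: "nat \<Rightarrow> real"
  assumes "s = 1 \<or> s = -1"
    and "ttb lam \<alpha> \<beta> \<noteq> 0"
    and "etadot s p p + lam * etadot s q q = - mu lam \<alpha> \<beta>"
    and "2 * etadot s p q = - nu lam \<alpha> \<beta>"
  shows "satisfies_CYBE s lam (r_pq s lam \<alpha> \<beta> p q)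
       \<and> compatible_r_matrix s lam \<alpha> \<beta> (r_pq s lam \<alpha> \<beta> p q)"
proof -
  have cybe: "satisfies_CYBE s lam (r_pq s lam \<alpha> \<beta> p q)"
    unfolding satisfies_CYBE_def
  proof (intro allI impI)
    fix a b c :: nat
    assume abc: "a < 6" "b < 6" "c < 6"
    have "cybe s lam (r_pq s lam \<alpha> \<beta> p q) a b c =
      (etadot s p p + lam * etadot s q q + mu lam \<alpha> \<beta>) * omega1 lam a b c
      + (2 * etadot s p q + nu lam \<alpha> \<beta>) * omega2 lam a b c"
      using cybe_r_pq[OF assms(1) abc] .
    also have "\<dots> = 0"
      using assms(3,4) by simp
    finally show "cybe s lam (r_pq s lam \<alpha> \<beta> p q) a b c = 0" .
  qed
  let ?r' = "r_pq s lam \<alpha> \<beta> p q - Ktau s lam \<alpha> \<beta>"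
  have antisym: "\<forall>i j. ?r' i j = - ?r' j i"
    using r_pq_minus_Ktau_antisym by blast
  have decomp: "r_pq s lam \<alpha> \<beta> p q = ?r' + Ktau s lam \<alpha> \<beta>"
    by simp
  from antisym decomp
  have "\<exists>r'. (\<forall>i j. r' i j = - r' j i) \<and> r_pq s lam \<alpha> \<beta> p q = r' + Ktau s lam \<alpha> \<beta>"
    by blast
  with cybe show ?thesis
    unfolding compatible_r_matrix_def by blast
qed

end
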